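(* Consider a discounted Markov decision process with finite state space $\mathcal S$, finite action space $\mathcal A$, transition probabilities $\mathcal P(s'\mid s,a)$, reward function $R:\mathcal S\times\mathcal A\to[0,1]$, discount factor $\gamma\in[0,1)$ and initial state distribution $p$. For a policy $\pi\in\mathcal X:=\Delta(\mathcal A)^{|\mathcal S|}$ (viewed as a matrix $(\pi_{sa})\in\mathbb R^{|\mathcal S|\times|\mathcal A|}$ whose rows $\pi_s$ are probability vectors), let $V_p(\pi):=-\mathbb E\big[\sum_{h=0}^\infty\gamma^hR(s_h,a_h)\big]$, where $s_0\sim p$, $a_h\sim\pi_{s_h}$, $s_{h+1}\sim\mathcal P(\cdot\mid s_h,a_h)$. Then for any $\pi,\pi'\in\mathcal X$, $$\|\nabla V_p(\pi)-\nabla V_p(\pi')\|_{2,\infty}\le\frac{2\gamma}{(1-\gamma)^3}\|\pi-\pi'\|_{2,1}.$$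
   Context: For a matrix $M\in\mathbb R^{|\mathcal S|\times|\mathcal A|}$: $\|M\|_{2,1}^2:=\sum_{s\in\mathcal S}\big(\sum_{a\in\mathcal A}|M_{sa}|\big)^2$ and $\|M\|_{2,\infty}^2:=\sum_{s\in\mathcal S}\big(\max_{a\in\mathcal A}|M_{sa}|\big)^2$. $\Delta(\mathcal A)$ is the probability simplex on $\mathcal A$; $\nabla V_p(\pi)$ is the gradient with respect to the entries $\pi_{sa}$. *)

theory Defs
  imports "HOL-Analysis.Analysis"
begin

text \<open>Transition kernel P s a s' = P(s' | s, a), reward R s a, initial distribution p.
  A policy (or, more generally, a real |S| x |A| matrix) is pol :: 's => 'a => real.\<close>

definition is_distribution :: "('b::finite \<Rightarrow> real) \<Rightarrow> bool" where
  "is_distribution q \<longleftrightarrow> (\<forall>x. q x \<ge> 0) \<and> (\<Sum>x\<in>UNIV. q x) = 1"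

definition is_policy :: "('s::finite \<Rightarrow> 'a::finite \<Rightarrow> real) \<Rightarrow> bool" where
  "is_policy pol \<longleftrightarrow> (\<forall>s. is_distribution (pol s))"

primrec state_dist ::
  "('s::finite \<Rightarrow> 'a::finite \<Rightarrow> 's \<Rightarrow> real) \<Rightarrow> ('s \<Rightarrow> 'a \<Rightarrow> real) \<Rightarrow> ('s \<Rightarrow> real) \<Rightarrow> nat \<Rightarrow> 's \<Rightarrow> real" where
  "state_dist P pol p 0 = p"
| "state_dist P pol p (Suc h) =
     (\<lambda>s'. \<Sum>s\<in>UNIV. \<Sum>a\<in>UNIV. state_dist P pol p h s * pol s a * P s a s')"

text \<open>V_p(pol) = - E[ sum_h gamma^h R(s_h,a_h) ] = - sum_h gamma^h sum_{s,a} Pr(s_h=s) pol(s,a) R(s,a).\<close>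
definition V ::
  "('s::finite \<Rightarrow> 'a::finite \<Rightarrow> 's \<Rightarrow> real) \<Rightarrow> ('s \<Rightarrow> 'a \<Rightarrow> real) \<Rightarrow> real \<Rightarrow> ('s \<Rightarrow> real)
    \<Rightarrow> ('s \<Rightarrow> 'a \<Rightarrow> real) \<Rightarrow> real" where
  "V P R \<gamma> p pol =
     - (\<Sum>h. \<gamma> ^ h * (\<Sum>s\<in>UNIV. \<Sum>a\<in>UNIV. state_dist P pol p h s * pol s a * R s a))"

definition gradV ::
  "('s::finite \<Rightarrow> 'a::finite \<Rightarrow> 's \<Rightarrow> real) \<Rightarrow> ('s \<Rightarrow> 'a \<Rightarrow> real) \<Rightarrow> real \<Rightarrow> ('s \<Rightarrow> real)
    \<Rightarrow> ('s \<Rightarrow> 'a \<Rightarrow> real) \<Rightarrow> 's \<Rightarrow> 'a \<Rightarrow> real" where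
  "gradV P R \<gamma> p pol s a =
     deriv (\<lambda>t. V P R \<gamma> p (pol(s := (pol s)(a := pol s a + t)))) 0"

definition norm21 :: "('s::finite \<Rightarrow> 'a::finite \<Rightarrow> real) \<Rightarrow> real" where
  "norm21 M = sqrt (\<Sum>s\<in>UNIV. (\<Sum>a\<in>UNIV. \<bar>M s a\<bar>)\<^sup>2)"

definition norm2inf :: "('s::finite \<Rightarrow> 'a::finite \<Rightarrow> real) \<Rightarrow> real" where
  "norm2inf M = sqrt (\<Sum>s\<in>UNIV. (Max (range (\<lambda>a. \<bar>M s a\<bar>)))\<^sup>2)"

end

theory Submission
  imports Defs
begin

(* Write mu_pi = sum_h gamma^h d_h for the discounted state occupancy; it is the unique fixed
   point of mu = p + gamma mu P_pi, where P_pi(s,s') = sum_a pi(s,a) P(s'|s,a), and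
   V_p(pi) = - sum_s mu_pi(s) r_pi(s).  Perturbing the single entry pi(s,a) by t changes P_pi by a
   rank-one matrix, so by Sherman-Morrison the perturbed occupancy, and with it V_p, is an explicit
   rational function of t.  Differentiating at t = 0 gives the policy gradient formula
   dV_p/dpi(s,a) = - mu_pi(s) Q_pi(s,a) with Q_pi(s,a) = R(s,a) - gamma V_{P(.|s,a)}(pi), which lies
   in [0, 1/(1-gamma)].
   Comparing the fixed-point equations of pi and pi' in l1 gives
   |mu_pi - mu_pi'|_1 <= gamma m / (1-gamma)^2 with m = max_s |pi_s - pi'_s|_1, hence
   |V(pi) - V(pi')| <= m / (1-gamma)^2.  Splitting mu Q - mu' Q' = (mu - mu') Q + mu' (Q - Q'), the
   row maxima of the gradient difference sum to at most 2 gamma m / (1-gamma)^3; the (2,inf)-norm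
   is at most this sum, and m is at most the (2,1)-norm of pi - pi'. *)

section \<open>Discounted occupancy\<close>

definition policy_kernel ::
  "('s::finite \<Rightarrow> 'a::finite \<Rightarrow> 's \<Rightarrow> real) \<Rightarrow> ('s \<Rightarrow> 'a \<Rightarrow> real) \<Rightarrow> 's \<Rightarrow> 's \<Rightarrow> real" where
  "policy_kernel P x s s' = (\<Sum>a\<in>UNIV. x s a * P s a s')"

definition occupancy ::
  "('s::finite \<Rightarrow> 'a::finite \<Rightarrow> 's \<Rightarrow> real) \<Rightarrow> ('s \<Rightarrow> 'a \<Rightarrow> real) \<Rightarrow> ('s \<Rightarrow> real) \<Rightarrow> real \<Rightarrow> 's \<Rightarrow> real" where
  "occupancy P x q g s = (\<Sum>h. g ^ h * state_dist P x q h s)"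

definition policy_reward :: "('s::finite \<Rightarrow> 'a::finite \<Rightarrow> real) \<Rightarrow> ('s \<Rightarrow> 'a \<Rightarrow> real) \<Rightarrow> 's \<Rightarrow> real" where
  "policy_reward R x s = (\<Sum>a\<in>UNIV. x s a * R s a)"

lemma state_dist_Suc_policy_kernel:
  "state_dist P x q (Suc h) s' = (\<Sum>s\<in>UNIV. state_dist P x q h s * policy_kernel P x s s')"
  by (simp add: policy_kernel_def sum_distrib_left mult.assoc)

lemma sum_abs_policy_kernel_le:
  fixes P :: "'s::finite \<Rightarrow> 'a::finite \<Rightarrow> 's \<Rightarrow> real"
  assumes P: "\<forall>s a. is_distribution (P s a)"
  shows "(\<Sum>s'\<in>UNIV. \<bar>\<Sum>s\<in>UNIV. e s * policy_kernel P x s s'\<bar>)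
           \<le> (\<Sum>s\<in>UNIV. \<bar>e s\<bar> * (\<Sum>a\<in>UNIV. \<bar>x s a\<bar>))"
proof -
  have P0: "0 \<le> P s a s'" and P1: "(\<Sum>s'\<in>UNIV. P s a s') = 1" for s a s'
    using P by (auto simp: is_distribution_def)
  have "\<bar>\<Sum>s\<in>UNIV. e s * policy_kernel P x s s'\<bar> \<le> (\<Sum>s\<in>UNIV. \<Sum>a\<in>UNIV. \<bar>e s\<bar> * \<bar>x s a\<bar> * P s a s')"
    for s'
    unfolding policy_kernel_def sum_distrib_left
    by (rule order_trans[OF sum_abs sum_mono], rule order_trans[OF sum_abs sum_mono])
       (simp add: abs_mult P0)
  then have "(\<Sum>s'\<in>UNIV. \<bar>\<Sum>s\<in>UNIV. e s * policy_kernel P x s s'\<bar>)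
      \<le> (\<Sum>s'\<in>UNIV. \<Sum>s\<in>UNIV. \<Sum>a\<in>UNIV. \<bar>e s\<bar> * \<bar>x s a\<bar> * P s a s')"
    by (rule sum_mono)
  also have "\<dots> = (\<Sum>s\<in>UNIV. \<Sum>a\<in>UNIV. \<bar>e s\<bar> * \<bar>x s a\<bar> * (\<Sum>s'\<in>UNIV. P s a s'))"
    by (subst sum.swap, rule sum.cong[OF refl], subst sum.swap) (simp add: sum_distrib_left)
  finally show ?thesis
    by (simp add: P1 sum_distrib_left)
qed

lemma sum_abs_state_dist_le:
  fixes P :: "'s::finite \<Rightarrow> 'a::finite \<Rightarrow> 's \<Rightarrow> real"
  assumes P: "\<forall>s a. is_distribution (P s a)" and B: "\<forall>s. (\<Sum>a\<in>UNIV. \<bar>x s a\<bar>) \<le> B"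
  shows "(\<Sum>s\<in>UNIV. \<bar>state_dist P x q h s\<bar>) \<le> B ^ h * (\<Sum>s\<in>UNIV. \<bar>q s\<bar>)"
proof (induction h)
  case 0
  then show ?case by simp
next
  case (Suc h)
  have "0 \<le> B"
    by (rule order_trans[OF sum_nonneg B[rule_format]]) simp
  have "(\<Sum>s'\<in>UNIV. \<bar>state_dist P x q (Suc h) s'\<bar>)
      \<le> (\<Sum>s\<in>UNIV. \<bar>state_dist P x q h s\<bar> * (\<Sum>a\<in>UNIV. \<bar>x s a\<bar>))"
    unfolding state_dist_Suc_policy_kernel by (rule sum_abs_policy_kernel_le[OF P])
  also have "\<dots> \<le> (\<Sum>s\<in>UNIV. \<bar>state_dist P x q h s\<bar> * B)"
    by (intro sum_mono mult_left_mono B[rule_format]) simp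
  also have "\<dots> = B * (\<Sum>s\<in>UNIV. \<bar>state_dist P x q h s\<bar>)"
    by (simp add: sum_distrib_left mult.commute)
  also have "\<dots> \<le> B * (B ^ h * (\<Sum>s\<in>UNIV. \<bar>q s\<bar>))"
    using Suc \<open>0 \<le> B\<close> by (rule mult_left_mono)
  finally show ?case
    by simp
qed

lemma summable_discounted_state_dist:
  fixes P :: "'s::finite \<Rightarrow> 'a::finite \<Rightarrow> 's \<Rightarrow> real"
  assumes P: "\<forall>s a. is_distribution (P s a)" and B: "\<forall>s. (\<Sum>a\<in>UNIV. \<bar>x s a\<bar>) \<le> B"
    and g0: "0 \<le> g" and gB: "g * B < 1"
  shows "summable (\<lambda>h. g ^ h * state_dist P x q h s)"
proof (rule summable_comparison_test)
  have "0 \<le> B"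
    by (rule order_trans[OF sum_nonneg B[rule_format]]) simp
  then show "summable (\<lambda>h. (g * B) ^ h * (\<Sum>s\<in>UNIV. \<bar>q s\<bar>))"
    using g0 gB by (intro summable_mult2 summable_geometric) simp
  have "\<bar>state_dist P x q h s\<bar> \<le> B ^ h * (\<Sum>s\<in>UNIV. \<bar>q s\<bar>)" for h
    by (rule order_trans[OF member_le_sum sum_abs_state_dist_le[OF P B]]) simp_all
  then show "\<exists>N. \<forall>h\<ge>N. norm (g ^ h * state_dist P x q h s) \<le> (g * B) ^ h * (\<Sum>s\<in>UNIV. \<bar>q s\<bar>)"
    using g0 by (auto simp: abs_mult power_mult_distrib mult.assoc intro!: mult_left_mono)
qed

lemma occupancy_fixpoint:
  fixes P :: "'s::finite \<Rightarrow> 'a::finite \<Rightarrow> 's \<Rightarrow> real"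
  assumes P: "\<forall>s a. is_distribution (P s a)" and B: "\<forall>s. (\<Sum>a\<in>UNIV. \<bar>x s a\<bar>) \<le> B"
    and g0: "0 \<le> g" and gB: "g * B < 1"
  shows "occupancy P x q g s' = q s' + g * (\<Sum>s\<in>UNIV. occupancy P x q g s * policy_kernel P x s s')"
proof -
  have "(\<lambda>h. \<Sum>s\<in>UNIV. (g ^ h * state_dist P x q h s) * policy_kernel P x s s')
      sums (\<Sum>s\<in>UNIV. occupancy P x q g s * policy_kernel P x s s')"
    unfolding occupancy_def
    by (intro sums_sum sums_mult2 summable_sums summable_discounted_state_dist[OF P B g0 gB])
  from sums_mult[OF this, of g]
  have "(\<lambda>h. g ^ Suc h * state_dist P x q (Suc h) s')
      sums (g * (\<Sum>s\<in>UNIV. occupancy P x q g s * policy_kernel P x s s'))"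
    by (simp only: state_dist_Suc_policy_kernel sum_distrib_left power_Suc mult.assoc)
  then have "(\<lambda>h. g ^ h * state_dist P x q h s')
      sums (g * (\<Sum>s\<in>UNIV. occupancy P x q g s * policy_kernel P x s s') + g ^ 0 * state_dist P x q 0 s')"
    by (rule sums_Suc_iff[THEN iffD1])
  then have "(\<lambda>h. g ^ h * state_dist P x q h s')
      sums (q s' + g * (\<Sum>s\<in>UNIV. occupancy P x q g s * policy_kernel P x s s'))"
    by (simp add: add.commute)
  then show ?thesis
    unfolding occupancy_def[of P x q g s'] by (rule sums_unique[symmetric])
qed

lemma V_eq_occupancy:
  fixes P :: "'s::finite \<Rightarrow> 'a::finite \<Rightarrow> 's \<Rightarrow> real"
  assumes P: "\<forall>s a. is_distribution (P s a)" and B: "\<forall>s. (\<Sum>a\<in>UNIV. \<bar>x s a\<bar>) \<le> B"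
    and g0: "0 \<le> g" and gB: "g * B < 1"
  shows "V P R g q x = - (\<Sum>s\<in>UNIV. occupancy P x q g s * policy_reward R x s)"
proof -
  have "(\<lambda>h. \<Sum>s\<in>UNIV. (g ^ h * state_dist P x q h s) * policy_reward R x s)
      sums (\<Sum>s\<in>UNIV. occupancy P x q g s * policy_reward R x s)"
    unfolding occupancy_def
    by (intro sums_sum sums_mult2 summable_sums summable_discounted_state_dist[OF P B g0 gB])
  then show ?thesis
    unfolding V_def policy_reward_def by (simp add: sums_iff sum_distrib_left mult.assoc)
qed

lemma fixpoint_sum_abs_diff_le:
  fixes P :: "'s::finite \<Rightarrow> 'a::finite \<Rightarrow> 's \<Rightarrow> real"
  assumes P: "\<forall>s a. is_distribution (P s a)" and B: "\<forall>s. (\<Sum>a\<in>UNIV. \<bar>x s a\<bar>) \<le> B"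
    and g0: "0 \<le> g"
    and y: "\<And>s'. y s' = q s' + g * (\<Sum>s\<in>UNIV. y s * policy_kernel P x s s')"
    and y': "\<And>s'. y' s' = q s' + g * (\<Sum>s\<in>UNIV. y' s * policy_kernel P x' s s')"
  shows "(\<Sum>s\<in>UNIV. \<bar>y s - y' s\<bar>)
           \<le> g * B * (\<Sum>s\<in>UNIV. \<bar>y s - y' s\<bar>)
             + g * (\<Sum>s\<in>UNIV. \<bar>y' s\<bar> * (\<Sum>a\<in>UNIV. \<bar>x s a - x' s a\<bar>))"
proof -
  have split: "y s' - y' s' = g * (\<Sum>s\<in>UNIV. (y s - y' s) * policy_kernel P x s s')
      + g * (\<Sum>s\<in>UNIV. y' s * policy_kernel P (\<lambda>s a. x s a - x' s a) s s')" for s'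
    using y[of s'] y'[of s']
    by (simp add: policy_kernel_def algebra_simps sum_subtractf sum.distrib)
  have contraction: "(\<Sum>s'\<in>UNIV. \<bar>\<Sum>s\<in>UNIV. (y s - y' s) * policy_kernel P x s s'\<bar>)
      \<le> B * (\<Sum>s\<in>UNIV. \<bar>y s - y' s\<bar>)"
  proof -
    have "(\<Sum>s'\<in>UNIV. \<bar>\<Sum>s\<in>UNIV. (y s - y' s) * policy_kernel P x s s'\<bar>)
        \<le> (\<Sum>s\<in>UNIV. \<bar>y s - y' s\<bar> * (\<Sum>a\<in>UNIV. \<bar>x s a\<bar>))"
      by (rule sum_abs_policy_kernel_le[OF P])
    also have "\<dots> \<le> (\<Sum>s\<in>UNIV. \<bar>y s - y' s\<bar> * B)"
      by (intro sum_mono mult_left_mono B[rule_format]) simp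
    finally show ?thesis
      by (simp add: sum_distrib_left mult.commute)
  qed
  have "(\<Sum>s'\<in>UNIV. \<bar>y s' - y' s'\<bar>)
      \<le> (\<Sum>s'\<in>UNIV. g * \<bar>\<Sum>s\<in>UNIV. (y s - y' s) * policy_kernel P x s s'\<bar>
        + g * \<bar>\<Sum>s\<in>UNIV. y' s * policy_kernel P (\<lambda>s a. x s a - x' s a) s s'\<bar>)"
    by (intro sum_mono, subst split, rule order_trans[OF abs_triangle_ineq]) (simp add: abs_mult g0)
  also have "\<dots> = g * (\<Sum>s'\<in>UNIV. \<bar>\<Sum>s\<in>UNIV. (y s - y' s) * policy_kernel P x s s'\<bar>)
        + g * (\<Sum>s'\<in>UNIV. \<bar>\<Sum>s\<in>UNIV. y' s * policy_kernel P (\<lambda>s a. x s a - x' s a) s s'\<bar>)"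
    by (simp only: sum.distrib sum_distrib_left)
  also have "\<dots> \<le> g * (B * (\<Sum>s\<in>UNIV. \<bar>y s - y' s\<bar>))
      + g * (\<Sum>s\<in>UNIV. \<bar>y' s\<bar> * (\<Sum>a\<in>UNIV. \<bar>x s a - x' s a\<bar>))"
    using g0 contraction by (intro add_mono mult_left_mono sum_abs_policy_kernel_le[OF P])
  finally show ?thesis
    by (simp add: mult_ac)
qed

lemma occupancy_unique:
  fixes P :: "'s::finite \<Rightarrow> 'a::finite \<Rightarrow> 's \<Rightarrow> real"
  assumes P: "\<forall>s a. is_distribution (P s a)" and B: "\<forall>s. (\<Sum>a\<in>UNIV. \<bar>x s a\<bar>) \<le> B"
    and g0: "0 \<le> g" and gB: "g * B < 1"
    and y: "\<And>s'. y s' = q s' + g * (\<Sum>s\<in>UNIV. y s * policy_kernel P x s s')"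
  shows "y = occupancy P x q g"
proof -
  let ?E = "\<Sum>s\<in>UNIV. \<bar>y s - occupancy P x q g s\<bar>"
  have "?E \<le> g * B * ?E"
    using fixpoint_sum_abs_diff_le[where x'=x, OF P B g0 y occupancy_fixpoint[OF P B g0 gB]] by simp
  then have "(1 - g * B) * ?E \<le> 0"
    by (simp add: algebra_simps)
  then have "?E \<le> 0"
    using gB by (simp add: mult_le_0_iff)
  then have "?E = 0"
    by (simp add: order_antisym sum_nonneg)
  then show ?thesis
    by (auto simp: sum_nonneg_eq_0_iff)
qed

lemma sum_abs_policy: "is_policy x \<Longrightarrow> (\<Sum>a\<in>UNIV. \<bar>x s a\<bar>) = 1"
  by (simp add: is_policy_def is_distribution_def)

lemma sum_policy_kernel:
  fixes P :: "'s::finite \<Rightarrow> 'a::finite \<Rightarrow> 's \<Rightarrow> real"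
  assumes P: "\<forall>s a. is_distribution (P s a)" and x: "is_policy x"
  shows "(\<Sum>s'\<in>UNIV. policy_kernel P x s s') = 1"
proof -
  have "(\<Sum>s'\<in>UNIV. policy_kernel P x s s') = (\<Sum>a\<in>UNIV. x s a * (\<Sum>s'\<in>UNIV. P s a s'))"
    unfolding policy_kernel_def by (subst sum.swap) (simp add: sum_distrib_left)
  also have "\<dots> = 1"
    using P x by (simp add: is_distribution_def is_policy_def)
  finally show ?thesis .
qed

lemma state_dist_nonneg:
  fixes P :: "'s::finite \<Rightarrow> 'a::finite \<Rightarrow> 's \<Rightarrow> real"
  assumes P: "\<forall>s a. is_distribution (P s a)" and x: "is_policy x" and q: "\<forall>s. 0 \<le> q s"
  shows "0 \<le> state_dist P x q h s"
proof (induction h arbitrary: s)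
  case 0
  then show ?case using q by simp
next
  case (Suc h)
  have "0 \<le> P s a s'" "0 \<le> x s a" for s a s'
    using P x by (auto simp: is_distribution_def is_policy_def)
  then show ?case
    using Suc by (auto intro!: sum_nonneg)
qed

lemma occupancy_nonneg:
  fixes P :: "'s::finite \<Rightarrow> 'a::finite \<Rightarrow> 's \<Rightarrow> real"
  assumes P: "\<forall>s a. is_distribution (P s a)" and x: "is_policy x" and q: "\<forall>s. 0 \<le> q s"
    and g0: "0 \<le> g" and g1: "g < 1"
  shows "0 \<le> occupancy P x q g s"
  unfolding occupancy_def
proof (rule suminf_nonneg)
  show "summable (\<lambda>h. g ^ h * state_dist P x q h s)"
    using g1 by (intro summable_discounted_state_dist[OF P _ g0, of x 1]) (simp_all add: sum_abs_policy[OF x])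
  show "0 \<le> g ^ h * state_dist P x q h s" for h
    using g0 state_dist_nonneg[OF P x q] by simp
qed

lemma sum_occupancy:
  fixes P :: "'s::finite \<Rightarrow> 'a::finite \<Rightarrow> 's \<Rightarrow> real"
  assumes P: "\<forall>s a. is_distribution (P s a)" and x: "is_policy x" and q: "is_distribution q"
    and g0: "0 \<le> g" and g1: "g < 1"
  shows "(\<Sum>s\<in>UNIV. occupancy P x q g s) = 1 / (1 - g)"
proof -
  have fixpoint: "occupancy P x q g s' = q s' + g * (\<Sum>s\<in>UNIV. occupancy P x q g s * policy_kernel P x s s')"
    for s'
    using g1 by (intro occupancy_fixpoint[OF P _ g0, of x 1]) (simp_all add: sum_abs_policy[OF x])
  have "(\<Sum>s'\<in>UNIV. occupancy P x q g s')
      = (\<Sum>s'\<in>UNIV. q s') + g * (\<Sum>s'\<in>UNIV. \<Sum>s\<in>UNIV. occupancy P x q g s * policy_kernel P x s s')"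
    by (subst fixpoint) (simp add: sum.distrib sum_distrib_left)
  also have "(\<Sum>s'\<in>UNIV. \<Sum>s\<in>UNIV. occupancy P x q g s * policy_kernel P x s s')
      = (\<Sum>s\<in>UNIV. occupancy P x q g s * (\<Sum>s'\<in>UNIV. policy_kernel P x s s'))"
    by (subst sum.swap) (simp add: sum_distrib_left)
  also have "\<dots> = (\<Sum>s\<in>UNIV. occupancy P x q g s)"
    by (simp add: sum_policy_kernel[OF P x])
  also have "(\<Sum>s'\<in>UNIV. q s') = 1"
    using q by (simp add: is_distribution_def)
  finally have "(\<Sum>s\<in>UNIV. occupancy P x q g s) = 1 + g * (\<Sum>s\<in>UNIV. occupancy P x q g s)" .
  then show ?thesis
    using g1 by (simp add: field_simps)
qed

section \<open>The policy gradient\<close>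

definition perturb :: "('s \<Rightarrow> 'a \<Rightarrow> real) \<Rightarrow> 's \<Rightarrow> 'a \<Rightarrow> real \<Rightarrow> 's \<Rightarrow> 'a \<Rightarrow> real" where
  "perturb x s a t = x(s := (x s)(a := x s a + t))"

lemma perturb_apply: "perturb x s a t s' b = x s' b + (if s' = s \<and> b = a then t else 0)"
  by (simp add: perturb_def)

lemma sum_perturb:
  "(\<Sum>b\<in>UNIV. perturb x s a t s' b * f b) = (\<Sum>b\<in>UNIV. x s' b * f b) + (if s' = s then t * f a else 0)"
  for f :: "'a::finite \<Rightarrow> real"
  by (simp add: perturb_apply distrib_right sum.distrib if_distrib[of "\<lambda>z. z * _"] cong: if_cong)

lemma sum_abs_perturb_le:
  fixes x :: "'s \<Rightarrow> 'a::finite \<Rightarrow> real"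
  assumes B: "\<forall>s'. (\<Sum>b\<in>UNIV. \<bar>x s' b\<bar>) \<le> B"
  shows "\<forall>s'. (\<Sum>b\<in>UNIV. \<bar>perturb x s a t s' b\<bar>) \<le> B + \<bar>t\<bar>"
proof
  fix s'
  have "(\<Sum>b\<in>UNIV. \<bar>perturb x s a t s' b\<bar>)
      \<le> (\<Sum>b\<in>UNIV. \<bar>x s' b\<bar>) + (\<Sum>b\<in>UNIV. \<bar>if s' = s \<and> b = a then t else 0\<bar>)"
    unfolding perturb_apply sum.distrib[symmetric] by (intro sum_mono abs_triangle_ineq)
  moreover have "(\<Sum>b\<in>UNIV. \<bar>if s' = s \<and> b = a then t else 0\<bar>) \<le> \<bar>t\<bar>"
    by (cases "s' = s") (simp_all add: if_distrib[where f = abs] cong: if_cong)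
  ultimately show "(\<Sum>b\<in>UNIV. \<bar>perturb x s a t s' b\<bar>) \<le> B + \<bar>t\<bar>"
    using B[rule_format, of s'] by linarith
qed

lemma policy_kernel_perturb:
  "policy_kernel P (perturb x s a t) s1 s2 = policy_kernel P x s1 s2 + (if s1 = s then t * P s a s2 else 0)"
  unfolding policy_kernel_def sum_perturb by simp

lemma policy_reward_perturb:
  "policy_reward R (perturb x s a t) s1 = policy_reward R x s1 + (if s1 = s then t * R s a else 0)"
  unfolding policy_reward_def sum_perturb by simp

(* V is minus the expected return, so this is the usual Q(s,a) = R(s,a) + gamma E[return from s']. *)
definition qvalue ::
  "('s::finite \<Rightarrow> 'a::finite \<Rightarrow> 's \<Rightarrow> real) \<Rightarrow> ('s \<Rightarrow> 'a \<Rightarrow> real) \<Rightarrow> real \<Rightarrow> ('s \<Rightarrow> 'a \<Rightarrow> real) \<Rightarrow> 's \<Rightarrow> 'a \<Rightarrow> real"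
  where "qvalue P R g x s a = R s a - g * V P R g (P s a) x"

(* Sherman-Morrison: perturbing x at (s, a) adds the rank-one matrix t e_s P(.|s,a) to the kernel. *)
lemma occupancy_perturb:
  fixes P :: "'s::finite \<Rightarrow> 'a::finite \<Rightarrow> 's \<Rightarrow> real"
  assumes P: "\<forall>s a. is_distribution (P s a)" and B: "\<forall>s. (\<Sum>a\<in>UNIV. \<bar>x s a\<bar>) \<le> B"
    and g0: "0 \<le> g" and gB: "g * (B + \<bar>t\<bar>) < 1"
    and nonsingular: "g * t * occupancy P x (P s a) g s \<noteq> 1"
  shows "occupancy P (perturb x s a t) q g s' = occupancy P x q g s'
           + g * t * occupancy P x q g s / (1 - g * t * occupancy P x (P s a) g s)
             * occupancy P x (P s a) g s'"
proof -
  define \<mu> where "\<mu> = occupancy P x q g"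
  define w where "w = occupancy P x (P s a) g"
  define k where "k = \<mu> s / (1 - g * t * w s)"
  define y where "y s' = \<mu> s' + g * t * k * w s'" for s'
  have "g * B \<le> g * (B + \<bar>t\<bar>)"
    using g0 by (simp add: mult_left_mono)
  then have gB': "g * B < 1"
    using gB by linarith
  have \<mu>_fixpoint: "\<mu> s' = q s' + g * (\<Sum>s1\<in>UNIV. \<mu> s1 * policy_kernel P x s1 s')" for s'
    unfolding \<mu>_def by (rule occupancy_fixpoint[OF P B g0 gB'])
  have w_fixpoint: "w s' = P s a s' + g * (\<Sum>s1\<in>UNIV. w s1 * policy_kernel P x s1 s')" for s'
    unfolding w_def by (rule occupancy_fixpoint[OF P B g0 gB'])
  have y_s: "y s = k"
    using nonsingular by (simp add: y_def k_def w_def field_simps)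
  have "y s' = q s' + g * (\<Sum>s1\<in>UNIV. y s1 * policy_kernel P (perturb x s a t) s1 s')" for s'
  proof -
    have "(\<Sum>s1\<in>UNIV. y s1 * policy_kernel P (perturb x s a t) s1 s')
        = (\<Sum>s1\<in>UNIV. y s1 * policy_kernel P x s1 s') + y s * (t * P s a s')"
      by (simp add: policy_kernel_perturb distrib_left sum.distrib if_distrib[where f = "\<lambda>z. _ * z"]
          cong: if_cong)
    also have "(\<Sum>s1\<in>UNIV. y s1 * policy_kernel P x s1 s')
        = (\<Sum>s1\<in>UNIV. \<mu> s1 * policy_kernel P x s1 s') + g * t * k * (\<Sum>s1\<in>UNIV. w s1 * policy_kernel P x s1 s')"
      by (simp add: y_def ring_distribs sum.distrib sum_distrib_left mult_ac)
    finally show ?thesis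
      unfolding y_s using \<mu>_fixpoint[of s'] w_fixpoint[of s'] by (simp add: y_def[of s'] algebra_simps)
  qed
  then have "occupancy P (perturb x s a t) q g = y"
    by (intro occupancy_unique[OF P sum_abs_perturb_le[OF B] g0 gB, symmetric])
  then show ?thesis
    by (simp add: y_def k_def \<mu>_def w_def)
qed

lemma V_perturb:
  fixes P :: "'s::finite \<Rightarrow> 'a::finite \<Rightarrow> 's \<Rightarrow> real"
  assumes P: "\<forall>s a. is_distribution (P s a)" and B: "\<forall>s. (\<Sum>a\<in>UNIV. \<bar>x s a\<bar>) \<le> B"
    and g0: "0 \<le> g" and gB: "g * (B + \<bar>t\<bar>) < 1"
    and nonsingular: "g * t * occupancy P x (P s a) g s \<noteq> 1"
  shows "V P R g q (perturb x s a t) = V P R g q x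
           - t * occupancy P x q g s / (1 - g * t * occupancy P x (P s a) g s) * qvalue P R g x s a"
proof -
  define \<mu> where "\<mu> = occupancy P x q g"
  define w where "w = occupancy P x (P s a) g"
  define k where "k = \<mu> s / (1 - g * t * w s)"
  have "g * B \<le> g * (B + \<bar>t\<bar>)"
    using g0 by (simp add: mult_left_mono)
  then have gB': "g * B < 1"
    using gB by linarith
  have occ: "occupancy P (perturb x s a t) q g s1 = \<mu> s1 + g * t * k * w s1" for s1
    using occupancy_perturb[OF P B g0 gB nonsingular] by (simp add: \<mu>_def w_def k_def)
  have occ_s: "occupancy P (perturb x s a t) q g s = k"
    using nonsingular by (simp add: occ k_def w_def field_simps)
  have "V P R g q (perturb x s a t)
      = - (\<Sum>s1\<in>UNIV. occupancy P (perturb x s a t) q g s1 * policy_reward R (perturb x s a t) s1)"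
    by (rule V_eq_occupancy[OF P sum_abs_perturb_le[OF B] g0 gB])
  also have "\<dots> = - (\<Sum>s1\<in>UNIV. occupancy P (perturb x s a t) q g s1 * policy_reward R x s1) - k * t * R s a"
    by (simp add: policy_reward_perturb occ_s distrib_left sum.distrib if_distrib[where f = "\<lambda>z. _ * z"]
        cong: if_cong)
  also have "\<dots> = - (\<Sum>s1\<in>UNIV. \<mu> s1 * policy_reward R x s1)
      - g * t * k * (\<Sum>s1\<in>UNIV. w s1 * policy_reward R x s1) - k * t * R s a"
    by (simp add: occ ring_distribs sum.distrib sum_distrib_left mult_ac)
  also have "\<dots> = V P R g q x + g * t * k * V P R g (P s a) x - k * t * R s a"
    unfolding \<mu>_def w_def V_eq_occupancy[OF P B g0 gB'] by simp
  finally have "V P R g q (perturb x s a t) = V P R g q x - t * k * qvalue P R g x s a"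
    by (simp add: qvalue_def algebra_simps)
  then show ?thesis
    by (simp add: k_def \<mu>_def w_def)
qed

lemma gradV_eq:
  fixes P :: "'s::finite \<Rightarrow> 'a::finite \<Rightarrow> 's \<Rightarrow> real"
  assumes P: "\<forall>s a. is_distribution (P s a)" and B: "\<forall>s. (\<Sum>a\<in>UNIV. \<bar>x s a\<bar>) \<le> B"
    and g0: "0 \<le> g" and gB: "g * B < 1"
  shows "gradV P R g q x s a = - occupancy P x q g s * qvalue P R g x s a"
proof -
  define c where "c = occupancy P x (P s a) g s"
  define G where "G t = V P R g q x - t * occupancy P x q g s / (1 - g * t * c) * qvalue P R g x s a" for t
  have "((\<lambda>t. g * (B + \<bar>t\<bar>)) \<longlongrightarrow> g * B) (nhds 0)"
    by (auto intro!: tendsto_eq_intros filterlim_ident)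
  then have "\<forall>\<^sub>F t in nhds 0. g * (B + \<bar>t\<bar>) < 1"
    using gB by (rule order_tendstoD)
  moreover have "((\<lambda>t. g * t * c) \<longlongrightarrow> 0) (nhds 0)"
    by (auto intro!: tendsto_eq_intros filterlim_ident)
  then have "\<forall>\<^sub>F t in nhds 0. g * t * c < 1"
    by (rule order_tendstoD) simp
  ultimately have "\<forall>\<^sub>F t in nhds 0. V P R g q (perturb x s a t) = G t"
    by eventually_elim (simp add: V_perturb[OF P B g0] G_def c_def)
  moreover have "(G has_real_derivative - occupancy P x q g s * qvalue P R g x s a) (at 0)"
    unfolding G_def by (auto intro!: derivative_eq_intros)
  ultimately have "((\<lambda>t. V P R g q (perturb x s a t))
      has_real_derivative - occupancy P x q g s * qvalue P R g x s a) (at 0)"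
    by (subst DERIV_cong_ev) auto
  then show ?thesis
    unfolding gradV_def perturb_def[symmetric] by (rule DERIV_imp_deriv)
qed

section \<open>Lipschitz continuity of the gradient\<close>

lemma sum_abs_occupancy_diff_le:
  fixes P :: "'s::finite \<Rightarrow> 'a::finite \<Rightarrow> 's \<Rightarrow> real"
  assumes P: "\<forall>s a. is_distribution (P s a)" and x: "is_policy x" and x': "is_policy x'"
    and q: "is_distribution q" and g0: "0 \<le> g" and g1: "g < 1"
    and m: "\<forall>s. (\<Sum>a\<in>UNIV. \<bar>x s a - x' s a\<bar>) \<le> m"
  shows "(\<Sum>s\<in>UNIV. \<bar>occupancy P x q g s - occupancy P x' q g s\<bar>) \<le> g * m / (1 - g)\<^sup>2"
proof -
  let ?E = "\<Sum>s\<in>UNIV. \<bar>occupancy P x q g s - occupancy P x' q g s\<bar>"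
  have B: "\<forall>s. (\<Sum>a\<in>UNIV. \<bar>x s a\<bar>) \<le> 1" and B': "\<forall>s. (\<Sum>a\<in>UNIV. \<bar>x' s a\<bar>) \<le> 1"
    by (simp_all add: sum_abs_policy x x')
  have g1': "g * 1 < 1"
    using g1 by simp
  have q0: "\<forall>s. 0 \<le> q s"
    using q by (simp add: is_distribution_def)
  have "(\<Sum>s\<in>UNIV. \<bar>occupancy P x' q g s\<bar> * (\<Sum>a\<in>UNIV. \<bar>x s a - x' s a\<bar>))
      \<le> (\<Sum>s\<in>UNIV. occupancy P x' q g s * m)"
    by (intro sum_mono) (simp add: occupancy_nonneg[OF P x' q0 g0 g1] m mult_left_mono)
  also have "\<dots> = m / (1 - g)"
    by (simp add: sum_distrib_right[symmetric] sum_occupancy[OF P x' q g0 g1])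
  finally have "g * (\<Sum>s\<in>UNIV. \<bar>occupancy P x' q g s\<bar> * (\<Sum>a\<in>UNIV. \<bar>x s a - x' s a\<bar>)) \<le> g * (m / (1 - g))"
    using g0 by (rule mult_left_mono)
  moreover have "?E \<le> g * 1 * ?E + g * (\<Sum>s\<in>UNIV. \<bar>occupancy P x' q g s\<bar> * (\<Sum>a\<in>UNIV. \<bar>x s a - x' s a\<bar>))"
    by (rule fixpoint_sum_abs_diff_le[OF P B g0 occupancy_fixpoint[OF P B g0 g1'] occupancy_fixpoint[OF P B' g0 g1']])
  ultimately have "(1 - g) * ?E \<le> g * m / (1 - g)"
    by (simp add: algebra_simps)
  then have "?E \<le> g * m / (1 - g) / (1 - g)"
    using g1 by (simp add: pos_le_divide_eq mult.commute)
  then show ?thesis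
    by (simp add: power2_eq_square)
qed

lemma policy_reward_bounds:
  assumes x: "is_policy x" and R: "\<forall>s a. 0 \<le> R s a \<and> R s a \<le> 1"
  shows "0 \<le> policy_reward R x s" and "policy_reward R x s \<le> 1"
proof -
  have x0: "0 \<le> x s a" for a
    using x by (simp add: is_policy_def is_distribution_def)
  show "0 \<le> policy_reward R x s"
    unfolding policy_reward_def using x0 R by (intro sum_nonneg) simp
  have "policy_reward R x s \<le> (\<Sum>a\<in>UNIV. x s a)"
    unfolding policy_reward_def using x0 R by (intro sum_mono) (simp add: mult_left_le)
  then show "policy_reward R x s \<le> 1"
    using x by (simp add: is_policy_def is_distribution_def)
qed

lemma abs_policy_reward_diff_le:
  assumes R: "\<forall>s a. 0 \<le> R s a \<and> R s a \<le> 1"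
  shows "\<bar>policy_reward R x s - policy_reward R x' s\<bar> \<le> (\<Sum>a\<in>UNIV. \<bar>x s a - x' s a\<bar>)"
proof -
  have "\<bar>policy_reward R x s - policy_reward R x' s\<bar> = \<bar>\<Sum>a\<in>UNIV. (x s a - x' s a) * R s a\<bar>"
    by (simp add: policy_reward_def sum_subtractf left_diff_distrib)
  also have "\<dots> \<le> (\<Sum>a\<in>UNIV. \<bar>x s a - x' s a\<bar>)"
    using R by (intro order_trans[OF sum_abs] sum_mono) (simp add: abs_mult mult_left_le)
  finally show ?thesis .
qed

lemma V_bounds:
  fixes P :: "'s::finite \<Rightarrow> 'a::finite \<Rightarrow> 's \<Rightarrow> real"
  assumes P: "\<forall>s a. is_distribution (P s a)" and x: "is_policy x" and q: "is_distribution q"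
    and g0: "0 \<le> g" and g1: "g < 1" and R: "\<forall>s a. 0 \<le> R s a \<and> R s a \<le> 1"
  shows "- V P R g q x \<le> 1 / (1 - g)" and "V P R g q x \<le> 0"
proof -
  have q0: "\<forall>s. 0 \<le> q s"
    using q by (simp add: is_distribution_def)
  note occ0 = occupancy_nonneg[OF P x q0 g0 g1] and r = policy_reward_bounds[OF x R]
  have V: "V P R g q x = - (\<Sum>s\<in>UNIV. occupancy P x q g s * policy_reward R x s)"
    using g1 by (intro V_eq_occupancy[OF P _ g0, of x 1]) (simp_all add: sum_abs_policy x)
  have "(\<Sum>s\<in>UNIV. occupancy P x q g s * policy_reward R x s) \<le> (\<Sum>s\<in>UNIV. occupancy P x q g s)"
    using occ0 r by (intro sum_mono) (simp add: mult_left_le)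
  then show "- V P R g q x \<le> 1 / (1 - g)"
    unfolding V sum_occupancy[OF P x q g0 g1] by simp
  show "V P R g q x \<le> 0"
    unfolding V using occ0 r by (simp add: sum_nonneg)
qed

lemma abs_V_diff_le:
  fixes P :: "'s::finite \<Rightarrow> 'a::finite \<Rightarrow> 's \<Rightarrow> real"
  assumes P: "\<forall>s a. is_distribution (P s a)" and x: "is_policy x" and x': "is_policy x'"
    and q: "is_distribution q" and g0: "0 \<le> g" and g1: "g < 1" and R: "\<forall>s a. 0 \<le> R s a \<and> R s a \<le> 1"
    and m: "\<forall>s. (\<Sum>a\<in>UNIV. \<bar>x s a - x' s a\<bar>) \<le> m"
  shows "\<bar>V P R g q x - V P R g q x'\<bar> \<le> m / (1 - g)\<^sup>2"
proof -
  let ?\<mu> = "occupancy P x q g" and ?\<mu>' = "occupancy P x' q g"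
    and ?r = "policy_reward R x" and ?r' = "policy_reward R x'"
  have B: "\<forall>s. (\<Sum>a\<in>UNIV. \<bar>x s a\<bar>) \<le> 1" and B': "\<forall>s. (\<Sum>a\<in>UNIV. \<bar>x' s a\<bar>) \<le> 1"
    by (simp_all add: sum_abs_policy x x')
  have g1': "g * 1 < 1"
    using g1 by simp
  have q0: "\<forall>s. 0 \<le> q s"
    using q by (simp add: is_distribution_def)
  have \<mu>'_nonneg: "0 \<le> ?\<mu>' s" for s
    by (rule occupancy_nonneg[OF P x' q0 g0 g1])
  have reward_diff: "\<bar>?r s - ?r' s\<bar> \<le> m" for s
    using abs_policy_reward_diff_le[OF R] m[rule_format] by (rule order_trans)
  have diff: "V P R g q x' - V P R g q x
      = (\<Sum>s\<in>UNIV. (?\<mu> s - ?\<mu>' s) * ?r s) + (\<Sum>s\<in>UNIV. ?\<mu>' s * (?r s - ?r' s))"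
    unfolding V_eq_occupancy[OF P B g0 g1'] V_eq_occupancy[OF P B' g0 g1']
    by (simp add: left_diff_distrib right_diff_distrib sum_subtractf)
  have "\<bar>V P R g q x - V P R g q x'\<bar>
      \<le> \<bar>\<Sum>s\<in>UNIV. (?\<mu> s - ?\<mu>' s) * ?r s\<bar> + \<bar>\<Sum>s\<in>UNIV. ?\<mu>' s * (?r s - ?r' s)\<bar>"
    unfolding abs_minus_commute[of "V P R g q x"] diff by (rule abs_triangle_ineq)
  moreover have "\<bar>\<Sum>s\<in>UNIV. (?\<mu> s - ?\<mu>' s) * ?r s\<bar> \<le> g * m / (1 - g)\<^sup>2"
    using policy_reward_bounds[OF x R]
    by (intro order_trans[OF sum_abs] order_trans[OF _ sum_abs_occupancy_diff_le[OF P x x' q g0 g1 m]]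
        sum_mono) (simp add: abs_mult mult_left_le)
  moreover have "\<bar>\<Sum>s\<in>UNIV. ?\<mu>' s * (?r s - ?r' s)\<bar> \<le> m / (1 - g)"
  proof -
    have "\<bar>?\<mu>' s * (?r s - ?r' s)\<bar> \<le> ?\<mu>' s * m" for s
      using \<mu>'_nonneg[of s] reward_diff[of s] by (simp add: abs_mult mult_left_mono)
    then have "\<bar>\<Sum>s\<in>UNIV. ?\<mu>' s * (?r s - ?r' s)\<bar> \<le> (\<Sum>s\<in>UNIV. ?\<mu>' s) * m"
      unfolding sum_distrib_right by (intro order_trans[OF sum_abs] sum_mono)
    then show ?thesis
      by (simp add: sum_occupancy[OF P x' q g0 g1])
  qed
  moreover have "m / (1 - g) = (1 - g) * m / (1 - g)\<^sup>2"
    using g1 by (simp add: power2_eq_square)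
  moreover have "g * m / (1 - g)\<^sup>2 + (1 - g) * m / (1 - g)\<^sup>2 = m / (1 - g)\<^sup>2"
    by (simp add: add_divide_distrib[symmetric] algebra_simps)
  ultimately show ?thesis
    by linarith
qed

lemma qvalue_bounds:
  fixes P :: "'s::finite \<Rightarrow> 'a::finite \<Rightarrow> 's \<Rightarrow> real"
  assumes P: "\<forall>s a. is_distribution (P s a)" and x: "is_policy x"
    and g0: "0 \<le> g" and g1: "g < 1" and R: "\<forall>s a. 0 \<le> R s a \<and> R s a \<le> 1"
  shows "0 \<le> qvalue P R g x s a" and "qvalue P R g x s a \<le> 1 / (1 - g)"
proof -
  have Psa: "is_distribution (P s a)"
    using P by simp
  have "g * V P R g (P s a) x \<le> 0"
    by (rule mult_nonneg_nonpos[OF g0 V_bounds(2)[OF P x Psa g0 g1 R]])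
  then show "0 \<le> qvalue P R g x s a"
    using R[rule_format, of s a] unfolding qvalue_def by linarith
  have "g * - V P R g (P s a) x \<le> g * (1 / (1 - g))"
    using V_bounds(1)[OF P x Psa g0 g1 R] g0 by (rule mult_left_mono)
  moreover have "1 + g * (1 / (1 - g)) = 1 / (1 - g)"
    using g1 by (simp add: field_simps)
  moreover have "qvalue P R g x s a = R s a + g * - V P R g (P s a) x"
    by (simp add: qvalue_def)
  ultimately show "qvalue P R g x s a \<le> 1 / (1 - g)"
    using R[rule_format, of s a] by linarith
qed

lemma abs_qvalue_diff_le:
  fixes P :: "'s::finite \<Rightarrow> 'a::finite \<Rightarrow> 's \<Rightarrow> real"
  assumes P: "\<forall>s a. is_distribution (P s a)" and x: "is_policy x" and x': "is_policy x'"
    and g0: "0 \<le> g" and g1: "g < 1" and R: "\<forall>s a. 0 \<le> R s a \<and> R s a \<le> 1"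
    and m: "\<forall>s. (\<Sum>a\<in>UNIV. \<bar>x s a - x' s a\<bar>) \<le> m"
  shows "\<bar>qvalue P R g x s a - qvalue P R g x' s a\<bar> \<le> g * (m / (1 - g)\<^sup>2)"
proof -
  have "qvalue P R g x s a - qvalue P R g x' s a = g * (V P R g (P s a) x' - V P R g (P s a) x)"
    by (simp add: qvalue_def algebra_simps)
  then have "\<bar>qvalue P R g x s a - qvalue P R g x' s a\<bar> = g * \<bar>V P R g (P s a) x - V P R g (P s a) x'\<bar>"
    using g0 by (simp add: abs_mult abs_minus_commute)
  also have "\<dots> \<le> g * (m / (1 - g)\<^sup>2)"
    using P g0 by (intro mult_left_mono abs_V_diff_le[OF P x x' _ g0 g1 R m]) simp_all
  finally show ?thesis .
qed

lemma abs_gradV_diff_le: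
  fixes P :: "'s::finite \<Rightarrow> 'a::finite \<Rightarrow> 's \<Rightarrow> real"
  assumes P: "\<forall>s a. is_distribution (P s a)" and x: "is_policy x" and x': "is_policy x'"
    and q: "is_distribution q" and g0: "0 \<le> g" and g1: "g < 1" and R: "\<forall>s a. 0 \<le> R s a \<and> R s a \<le> 1"
    and m: "\<forall>s. (\<Sum>a\<in>UNIV. \<bar>x s a - x' s a\<bar>) \<le> m"
  shows "\<bar>gradV P R g q x s a - gradV P R g q x' s a\<bar>
           \<le> \<bar>occupancy P x q g s - occupancy P x' q g s\<bar> / (1 - g)
             + g * m / (1 - g)\<^sup>2 * occupancy P x' q g s"
proof -
  let ?\<mu> = "occupancy P x q g" and ?\<mu>' = "occupancy P x' q g"
    and ?Q = "qvalue P R g x s a" and ?Q' = "qvalue P R g x' s a"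
  have B: "\<forall>s. (\<Sum>a\<in>UNIV. \<bar>x s a\<bar>) \<le> 1" and B': "\<forall>s. (\<Sum>a\<in>UNIV. \<bar>x' s a\<bar>) \<le> 1"
    by (simp_all add: sum_abs_policy x x')
  have g1': "g * 1 < 1"
    using g1 by simp
  have "0 \<le> ?\<mu>' s"
    using q by (intro occupancy_nonneg[OF P x' _ g0 g1]) (simp add: is_distribution_def)
  note Q = qvalue_bounds[OF P x g0 g1 R, of s a]
  have "gradV P R g q x s a - gradV P R g q x' s a = - ((?\<mu> s - ?\<mu>' s) * ?Q + ?\<mu>' s * (?Q - ?Q'))"
    unfolding gradV_eq[OF P B g0 g1'] gradV_eq[OF P B' g0 g1'] by (simp add: algebra_simps)
  then have "\<bar>gradV P R g q x s a - gradV P R g q x' s a\<bar> = \<bar>(?\<mu> s - ?\<mu>' s) * ?Q + ?\<mu>' s * (?Q - ?Q')\<bar>"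
    by simp
  also have "\<dots> \<le> \<bar>?\<mu> s - ?\<mu>' s\<bar> * ?Q + ?\<mu>' s * \<bar>?Q - ?Q'\<bar>"
    using abs_triangle_ineq[of "(?\<mu> s - ?\<mu>' s) * ?Q" "?\<mu>' s * (?Q - ?Q')"] Q(1) \<open>0 \<le> ?\<mu>' s\<close>
    by (simp add: abs_mult)
  also have "\<dots> \<le> \<bar>?\<mu> s - ?\<mu>' s\<bar> * (1 / (1 - g)) + ?\<mu>' s * (g * (m / (1 - g)\<^sup>2))"
    using Q(2) abs_qvalue_diff_le[OF P x x' g0 g1 R m] \<open>0 \<le> ?\<mu>' s\<close>
    by (intro add_mono mult_left_mono) simp_all
  finally show ?thesis
    by (simp add: mult_ac)
qed

lemma norm2inf_le_sum:
  fixes M :: "'s::finite \<Rightarrow> 'a::finite \<Rightarrow> real"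
  assumes "\<And>s a. \<bar>M s a\<bar> \<le> h s"
  shows "norm2inf M \<le> (\<Sum>s\<in>UNIV. h s)"
proof -
  have row_nonneg: "0 \<le> Max (range (\<lambda>a. \<bar>M s a\<bar>))" for s
    by (rule order_trans[OF abs_ge_zero Max_ge]) auto
  have row_le: "Max (range (\<lambda>a. \<bar>M s a\<bar>)) \<le> h s" for s
    using assms by (simp add: Max_le_iff)
  have "norm2inf M \<le> L2_set h UNIV"
    unfolding norm2inf_def L2_set_def using row_nonneg row_le
    by (intro real_sqrt_le_mono sum_mono power_mono)
  also have "\<dots> \<le> (\<Sum>s\<in>UNIV. h s)"
    using row_nonneg row_le by (intro L2_set_le_sum) (blast intro: order_trans)
  finally show ?thesis .
qed

lemma Max_sum_abs_le_norm21:
  fixes M :: "'s::finite \<Rightarrow> 'a::finite \<Rightarrow> real"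
  shows "Max (range (\<lambda>s. \<Sum>a\<in>UNIV. \<bar>M s a\<bar>)) \<le> norm21 M"
proof -
  have "Max (range (\<lambda>s. \<Sum>a\<in>UNIV. \<bar>M s a\<bar>)) \<in> range (\<lambda>s. \<Sum>a\<in>UNIV. \<bar>M s a\<bar>)"
    by (rule Max_in) simp_all
  then obtain s where "Max (range (\<lambda>s. \<Sum>a\<in>UNIV. \<bar>M s a\<bar>)) = (\<Sum>a\<in>UNIV. \<bar>M s a\<bar>)"
    by blast
  also have "\<dots> \<le> L2_set (\<lambda>s. \<Sum>a\<in>UNIV. \<bar>M s a\<bar>) UNIV"
    by (rule member_le_L2_set) simp_all
  also have "\<dots> = norm21 M"
    by (simp add: norm21_def L2_set_def)
  finally show ?thesis .
qed

theorem proposition1: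
  fixes P :: "'s::finite \<Rightarrow> 'a::finite \<Rightarrow> 's \<Rightarrow> real"
    and R :: "'s \<Rightarrow> 'a \<Rightarrow> real"
    and \<gamma> :: real
    and p :: "'s \<Rightarrow> real"
    and pol pol' :: "'s \<Rightarrow> 'a \<Rightarrow> real"
  assumes "\<And>s a. is_distribution (P s a)"
    and "\<And>s a. 0 \<le> R s a \<and> R s a \<le> 1"
    and "0 \<le> \<gamma>" and "\<gamma> < 1"
    and "is_distribution p"
    and "is_policy pol" and "is_policy pol'"
  shows "norm2inf (\<lambda>s a. gradV P R \<gamma> p pol s a - gradV P R \<gamma> p pol' s a)
           \<le> 2 * \<gamma> / (1 - \<gamma>) ^ 3 * norm21 (\<lambda>s a. pol s a - pol' s a)"
proof -
  have P: "\<forall>s a. is_distribution (P s a)" and R: "\<forall>s a. 0 \<le> R s a \<and> R s a \<le> 1"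
    using assms(1,2) by blast+
  note g0 = assms(3) and g1 = assms(4) and p = assms(5) and pol = assms(6) and pol' = assms(7)
  define m where "m = Max (range (\<lambda>s. \<Sum>a\<in>UNIV. \<bar>pol s a - pol' s a\<bar>))"
  have m: "\<forall>s. (\<Sum>a\<in>UNIV. \<bar>pol s a - pol' s a\<bar>) \<le> m"
    by (simp add: m_def)
  let ?\<mu> = "occupancy P pol p \<gamma>" and ?\<mu>' = "occupancy P pol' p \<gamma>"
  have "norm2inf (\<lambda>s a. gradV P R \<gamma> p pol s a - gradV P R \<gamma> p pol' s a)
      \<le> (\<Sum>s\<in>UNIV. \<bar>?\<mu> s - ?\<mu>' s\<bar> / (1 - \<gamma>) + \<gamma> * m / (1 - \<gamma>)\<^sup>2 * ?\<mu>' s)"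
    by (rule norm2inf_le_sum, rule abs_gradV_diff_le[OF P pol pol' p g0 g1 R m])
  also have "\<dots> = (\<Sum>s\<in>UNIV. \<bar>?\<mu> s - ?\<mu>' s\<bar>) / (1 - \<gamma>) + \<gamma> * m / (1 - \<gamma>)\<^sup>2 * (\<Sum>s\<in>UNIV. ?\<mu>' s)"
    by (simp add: sum.distrib sum_divide_distrib sum_distrib_left)
  also have "\<dots> \<le> \<gamma> * m / (1 - \<gamma>)\<^sup>2 / (1 - \<gamma>) + \<gamma> * m / (1 - \<gamma>)\<^sup>2 * (1 / (1 - \<gamma>))"
    using g1 by (intro add_mono divide_right_mono sum_abs_occupancy_diff_le[OF P pol pol' p g0 g1 m])
      (simp_all add: sum_occupancy[OF P pol' p g0 g1])
  also have "\<dots> = 2 * \<gamma> / (1 - \<gamma>) ^ 3 * m"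
    using g1 by (simp add: field_simps power2_eq_square power3_eq_cube)
  also have "\<dots> \<le> 2 * \<gamma> / (1 - \<gamma>) ^ 3 * norm21 (\<lambda>s a. pol s a - pol' s a)"
    using g0 g1 by (intro mult_left_mono) (simp_all add: m_def Max_sum_abs_le_norm21)
  finally show ?thesis .
qed

end
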